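(* Let $f:(\mathbb C^2,0)\to(\mathbb C,0)$ be an irreducible plane curve germ which is singular at $0$, let $p,q$ be coprime positive integers, and let $G(M)$ be the plumbing graph of $M=S^3_{-p/q}(K_f)$ described in the context. Then $G(M)$ is an almost rational (AR) graph.
   Context: $K_f=\{f=0\}\cap S^3_\epsilon\subset S^3$ is the (algebraic) knot of $f$; it is not the unknot. Let $G(f)$ be the minimal embedded good resolution graph of $f$ (a tree of rational curves decorated by self-intersection numbers); it has a unique vertex $v_0$ with decoration $-1$, and the strict transform of $\{f=0\}$ meets the exceptional curve $E_{v_0}$. Let $\bar G$ be this graph with the arrow (strict transform) removed, and let $m_f$ be the vanishing order of the pull-back of $f$ along $E_{v_0}$. Write $p/q=[k_1,\dots,k_s]=k_1-1/(k_2-1/(\cdots-1/k_s))$ with integers $k_1\ge 1$ and $k_j\ge2$ for $j\ge 2$. The graph $G(M)$ is obtained from $\bar G$ by attaching a chain of vertices $v_1,\dots,v_s$ (with $v_1$ joined to $v_0$ and $v_j$ joined to $v_{j+1}$), where $v_1$ has Euler number $-k_1-m_f$ and $v_j$ has Euler number $-k_j$ for $2\le j\le s$; it is a negative definite plumbing graph (all vertices genus $0$ spheres) whose plumbed 3-manifold is $M$. For a connected negative definite plumbing tree with lattice $L$ (basis the vertices, intersection form given by Euler numbers on the diagonal and $1$ for adjacent vertices) and canonical class $K$ (defined by $(K,b_v)=-e_v-2$ for every vertex $v$), the graph is called rational if $-(l,l+K)/2\ge 1$ for every nonzero $l\ge0$ in $L$ (Artin's criterion). A graph is called almost rational (AR)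 if it has a vertex $v$ such that replacing the Euler number $e_v$ by any smaller integer yields a rational graph. *)

theory Defs
  imports "HOL-Analysis.Analysis"
begin

text \<open>A plumbing graph is given by a vertex set V (a finite set of naturals), Euler numbers
  e and a symmetric adjacency relation A. Lattice elements are integer functions on V.\<close>

definition pl_form :: "nat set \<Rightarrow> (nat \<Rightarrow> int) \<Rightarrow> (nat \<Rightarrow> nat \<Rightarrow> bool)
    \<Rightarrow> (nat \<Rightarrow> int) \<Rightarrow> (nat \<Rightarrow> int) \<Rightarrow> int" where
  "pl_form V e A l l' = (\<Sum>v\<in>V. e v * l v * l' v)
      + (\<Sum>u\<in>V. \<Sum>v\<in>V. if A u v then l u * l' v else 0)"

text \<open>Pairing with the canonical class K, defined by (K, b_v) = - e_v - 2.\<close>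
definition pl_K :: "nat set \<Rightarrow> (nat \<Rightarrow> int) \<Rightarrow> (nat \<Rightarrow> int) \<Rightarrow> int" where
  "pl_K V e l = (\<Sum>v\<in>V. (- e v - 2) * l v)"

text \<open>Artin's criterion: -(l, l+K)/2 \<ge> 1 for every nonzero l \<ge> 0.\<close>
definition rational_graph :: "nat set \<Rightarrow> (nat \<Rightarrow> int) \<Rightarrow> (nat \<Rightarrow> nat \<Rightarrow> bool) \<Rightarrow> bool" where
  "rational_graph V e A \<longleftrightarrow>
     (\<forall>l. (\<forall>v\<in>V. 0 \<le> l v) \<and> (\<exists>v\<in>V. l v \<noteq> 0) \<longrightarrow>
          - (pl_form V e A l l + pl_K V e l) \<ge> 2)"

definition AR_graph :: "nat set \<Rightarrow> (nat \<Rightarrow> int) \<Rightarrow> (nat \<Rightarrow> nat \<Rightarrow> bool) \<Rightarrow> bool" where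
  "AR_graph V e A \<longleftrightarrow> (\<exists>v\<in>V. \<forall>x::int. x < e v \<longrightarrow> rational_graph V (e(v := x)) A)"

fun hjcf :: "int list \<Rightarrow> real" where
  "hjcf [] = 0"
| "hjcf [k] = of_int k"
| "hjcf (k # ks) = of_int k - 1 / hjcf ks"

section \<open>Minimal embedded good resolution of a plane branch, by point blow-ups\<close>

text \<open>A state of the resolution process: the strict transform of the branch, parametrised as
  t \<mapsto> (px t, py t) in local coordinates (x,y) centred at the point where it meets the
  current exceptional divisor; ax / ay record which exceptional curve (if any) is the
  coordinate axis x = 0 / y = 0; nv is the number of exceptional curves created so far
  (numbered 0..nv-1), eu their self-intersections, adj the dual graph, and mu the vanishing
  order of the pull-back of f along each of them.\<close>

record rstate =
  px :: "complex fps"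
  py :: "complex fps"
  ax :: "nat option"
  ay :: "nat option"
  nv :: nat
  eu :: "nat \<Rightarrow> int"
  adj :: "nat \<Rightarrow> nat \<Rightarrow> bool"
  mu :: "nat \<Rightarrow> nat"

definition bmult :: "complex fps \<Rightarrow> complex fps \<Rightarrow> nat" where
  "bmult X Y = (if X = 0 then subdegree Y else if Y = 0 then subdegree X
                else min (subdegree X) (subdegree Y))"

text \<open>Exact quotient F / G of power series when subdegree G \<le> subdegree F.\<close>
definition fdiv :: "complex fps \<Rightarrow> complex fps \<Rightarrow> complex fps" where
  "fdiv F G = fps_shift (subdegree G) F * inverse (fps_shift (subdegree G) G)"

definition through :: "rstate \<Rightarrow> nat \<Rightarrow> bool" where
  "through st c \<longleftrightarrow> ax st = Some c \<or> ay st = Some c"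

definition optmu :: "rstate \<Rightarrow> nat option \<Rightarrow> nat" where
  "optmu st o' = (case o' of None \<Rightarrow> 0 | Some c \<Rightarrow> mu st c)"

definition blowup :: "rstate \<Rightarrow> rstate" where
  "blowup st =
    (let X = px st; Y = py st; k = nv st;
         eu' = (\<lambda>c. if c = k then -1 else if through st c then eu st c - 1 else eu st c);
         adj' = (\<lambda>u v. (adj st u v \<and> \<not> (through st u \<and> through st v))
                       \<or> (u = k \<and> through st v) \<or> (v = k \<and> through st u));
         mu' = (mu st)(k := bmult X Y + optmu st (ax st) + optmu st (ay st))
     in if Y = 0 \<or> subdegree X \<le> subdegree Y then
          (let Y1 = fdiv Y X; c = fps_nth Y1 0 in
           \<lparr> px = X, py = Y1 - fps_const c, ax = Some k,
             ay = (if c = 0 then ay st else None),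
             nv = k + 1, eu = eu', adj = adj', mu = mu' \<rparr>)
        else
          \<lparr> px = fdiv X Y, py = Y, ax = ax st, ay = Some k,
            nv = k + 1, eu = eu', adj = adj', mu = mu' \<rparr>)"

text \<open>The total transform is a normal crossing divisor at the point on the strict transform.\<close>
definition good :: "rstate \<Rightarrow> bool" where
  "good st \<longleftrightarrow>
    (case (ax st, ay st) of
       (None, None) \<Rightarrow> bmult (px st) (py st) = 1
     | (Some _, None) \<Rightarrow> px st \<noteq> 0 \<and> subdegree (px st) = 1
     | (None, Some _) \<Rightarrow> py st \<noteq> 0 \<and> subdegree (py st) = 1
     | (Some _, Some _) \<Rightarrow> False)"

inductive resolves :: "rstate \<Rightarrow> rstate \<Rightarrow> bool" where
  finished: "good st \<Longrightarrow> resolves st st"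
| blowstep: "\<not> good st \<Longrightarrow> resolves (blowup st) R \<Longrightarrow> resolves st R"

definition init_state :: "nat \<Rightarrow> complex fps \<Rightarrow> rstate" where
  "init_state n y = \<lparr> px = fps_X ^ n, py = y, ax = None, ay = None, nv = 0,
                      eu = (\<lambda>_. 0), adj = (\<lambda>_ _. False), mu = (\<lambda>_. 0) \<rparr>"

section \<open>The plumbing graph G(M) of M = S^3_{-p/q}(K_f)\<close>

text \<open>Vertices 0..nv-1 form \<bar>G; v0 = nv - 1 is the last exceptional curve (the (-1)-curve
  met by the strict transform), m_f = mu v0; the chain v_1..v_s gets vertices nv..nv+s-1.\<close>

definition GM_V :: "rstate \<Rightarrow> int list \<Rightarrow> nat set" where
  "GM_V R ks = {..< nv R + length ks}"

definition GM_e :: "rstate \<Rightarrow> int list \<Rightarrow> nat \<Rightarrow> int" where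
  "GM_e R ks v =
     (if v < nv R then eu R v
      else if v = nv R then - (ks ! 0) - int (mu R (nv R - 1))
      else - (ks ! (v - nv R)))"

definition GM_A :: "rstate \<Rightarrow> int list \<Rightarrow> nat \<Rightarrow> nat \<Rightarrow> bool" where
  "GM_A R ks u v \<longleftrightarrow>
     (u < nv R \<and> v < nv R \<and> adj R u v)
   \<or> (u = nv R - 1 \<and> v = nv R) \<or> (v = nv R - 1 \<and> u = nv R)
   \<or> (nv R \<le> u \<and> v = u + 1 \<and> v < nv R + length ks)
   \<or> (nv R \<le> v \<and> u = v + 1 \<and> u < nv R + length ks)"

end

theory Submission
  imports Defs
begin

text \<open>Write 2\<chi>(l) = -(l, l + K). Blowing up a point that lies exactly on the curves of
  a clique Th adds a (a + 1) \<ge> 0 to 2\<chi>, where a compares l on the new curve with the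
  pull-back of l, and it adds at least 2 when l is supported on the new curve. Hence the dual
  graph \<bar>G of any sequence of point blow-ups is rational. Blowing up further, first a
  general point of v0 and then each time a general point of the newest curve, produces the
  chain of G(M) with Euler numbers -2, ..., -2, -1 and turns e_v0 = -1 into -2; since
  k_1 + m_f \<ge> 2 and k_j \<ge> 2, the graph G(M) with any e_v0 < -1 is obtained from this one by
  lowering Euler numbers, which preserves rationality. So G(M) is AR at v0; neither p/q
  itself nor the convergence of y plays a role.

  The real work is that the blow-up process terminates. Otherwise the order of the
  x-coordinate eventually stops dropping, from then on x stays fixed and y becomes a power
  series in x; going backwards through the blow-ups, t^n and y(t) are power series in this x.
  If x has order g \<ge> 2, rotating t by a primitive g-th root of unity fixes t^n, hence x,
  hence y, so g divides n and every exponent of y, contradicting primitivity; order 1 forces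
  y = 0.\<close>

unbundle no vec_syntax
notation fps_nth (infixl \<open>$\<close> 75)

section \<open>Artin's criterion under blow-ups\<close>

definition two_chi :: "nat set \<Rightarrow> (nat \<Rightarrow> int) \<Rightarrow> (nat \<Rightarrow> nat \<Rightarrow> bool) \<Rightarrow> (nat \<Rightarrow> int) \<Rightarrow> int"
  where "two_chi V e A l = - (pl_form V e A l l + pl_K V e l)"

lemma rational_graph_iff_two_chi:
  "rational_graph V e A \<longleftrightarrow>
     (\<forall>l. (\<forall>v\<in>V. 0 \<le> l v) \<and> (\<exists>v\<in>V. l v \<noteq> 0) \<longrightarrow> 2 \<le> two_chi V e A l)"
  by (simp add: rational_graph_def two_chi_def)

lemma two_chi_cong:
  assumes "\<forall>v\<in>V. e v = e' v" "\<forall>u\<in>V. \<forall>v\<in>V. A u v = A' u v"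
  shows "two_chi V e A l = two_chi V e' A' l"
  using assms unfolding two_chi_def pl_form_def pl_K_def by (auto intro!: sum.cong)

lemma rational_graph_cong:
  assumes "\<forall>v\<in>V. e v = e' v" "\<forall>u\<in>V. \<forall>v\<in>V. A u v = A' u v"
  shows "rational_graph V e A = rational_graph V e' A'"
  using two_chi_cong[OF assms] by (simp add: rational_graph_iff_two_chi)

lemma two_chi_vanishing:
  assumes "\<forall>v\<in>V. l v = 0"
  shows "two_chi V e A l = 0"
  using assms by (simp add: two_chi_def pl_form_def pl_K_def sum.neutral)

lemma two_chi_change_euler:
  "two_chi V e' A l = two_chi V e A l + (\<Sum>v\<in>V. (e v - e' v) * (l v * l v - l v))"
proof -
  have form: "pl_form V e A l l - pl_form V e' A l l = (\<Sum>v\<in>V. (e v - e' v) * (l v * l v))"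
    unfolding pl_form_def by (simp add: sum_subtractf[symmetric] algebra_simps)
  have canon: "pl_K V e' l - pl_K V e l = (\<Sum>v\<in>V. (e v - e' v) * l v)"
    unfolding pl_K_def by (simp add: sum_subtractf[symmetric] algebra_simps)
  have "(\<Sum>v\<in>V. (e v - e' v) * (l v * l v - l v))
      = (\<Sum>v\<in>V. (e v - e' v) * (l v * l v)) - (\<Sum>v\<in>V. (e v - e' v) * l v)"
    by (simp add: sum_subtractf[symmetric] right_diff_distrib)
  then show ?thesis using form canon unfolding two_chi_def by linarith
qed

lemma int_times_succ_nonneg: "0 \<le> (a::int) * (a + 1)"
  by (cases "a < 0") (auto simp: mult_nonpos_nonpos)

lemma rational_graph_mono:
  assumes rat: "rational_graph V e A" and le: "\<forall>v\<in>V. e' v \<le> e v"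
  shows "rational_graph V e' A"
  unfolding rational_graph_iff_two_chi
proof (intro allI impI)
  fix l :: "nat \<Rightarrow> int"
  assume l: "(\<forall>v\<in>V. 0 \<le> l v) \<and> (\<exists>v\<in>V. l v \<noteq> 0)"
  have "0 \<le> (\<Sum>v\<in>V. (e v - e' v) * (l v * l v - l v))"
  proof (intro sum_nonneg)
    fix v assume "v \<in> V"
    moreover have "l v * l v - l v = (l v - 1) * (l v - 1 + 1)" by (simp add: algebra_simps)
    ultimately show "0 \<le> (e v - e' v) * (l v * l v - l v)"
      using le int_times_succ_nonneg[of "l v - 1"] by simp
  qed
  moreover have "2 \<le> two_chi V e A l" using rat l by (simp add: rational_graph_iff_two_chi)
  ultimately show "2 \<le> two_chi V e' A l" by (simp add: two_chi_change_euler[of V e' A l e])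
qed

lemma sum_restrict_subset:
  assumes "finite V" "Th \<subseteq> V"
  shows "(\<Sum>v\<in>V. if v \<in> Th then f v else 0) = sum f Th"
  using assms by (simp add: sum.inter_restrict[symmetric] Int_absorb1)

lemma sum_pair_insert:
  assumes "finite V" "k \<notin> V"
  shows "(\<Sum>u\<in>insert k V. \<Sum>v\<in>insert k V. f u v :: int) =
         f k k + (\<Sum>v\<in>V. f k v) + (\<Sum>u\<in>V. f u k) + (\<Sum>u\<in>V. \<Sum>v\<in>V. f u v)"
  using assms by (simp add: sum.distrib)

lemma sum_adj_delete_clique:
  fixes l :: "nat \<Rightarrow> int"
  assumes fin: "finite V" and Th: "Th \<subseteq> V"
    and clique: "\<forall>u\<in>Th. \<forall>v\<in>Th. A u v \<longleftrightarrow> u \<noteq> v"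
    and adj_old: "\<forall>u\<in>V. \<forall>v\<in>V. A' u v \<longleftrightarrow> A u v \<and> \<not> (u \<in> Th \<and> v \<in> Th)"
  shows "(\<Sum>u\<in>V. \<Sum>v\<in>V. if A' u v then l u * l v else 0)
       = (\<Sum>u\<in>V. \<Sum>v\<in>V. if A u v then l u * l v else 0)
         - (sum l Th * sum l Th - (\<Sum>v\<in>Th. l v * l v))"
proof -
  have "(\<Sum>u\<in>V. \<Sum>v\<in>V. if u \<in> Th \<and> v \<in> Th \<and> u \<noteq> v then l u * l v else 0)
      = (\<Sum>u\<in>V. if u \<in> Th then \<Sum>v\<in>V. if v \<in> Th then (if u \<noteq> v then l u * l v else 0) else 0
                   else 0)"
    by (intro sum.cong refl) (auto intro!: sum.cong)
  also have "\<dots> = (\<Sum>u\<in>Th. \<Sum>v\<in>Th. if u \<noteq> v then l u * l v else 0)"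
    by (simp only: sum_restrict_subset[OF fin Th])
  also have "\<dots> = (\<Sum>u\<in>Th. \<Sum>v\<in>Th. l u * l v - (if u = v then l u * l v else 0))"
    by (intro sum.cong refl) auto
  also have "\<dots> = sum l Th * sum l Th - (\<Sum>v\<in>Th. l v * l v)"
    using finite_subset[OF Th fin] by (simp add: sum_subtractf sum_product)
  finally have clique_sum: "(\<Sum>u\<in>V. \<Sum>v\<in>V. if u \<in> Th \<and> v \<in> Th \<and> u \<noteq> v then l u * l v else 0)
      = sum l Th * sum l Th - (\<Sum>v\<in>Th. l v * l v)" .
  have "(\<Sum>u\<in>V. \<Sum>v\<in>V. if A' u v then l u * l v else 0)
      = (\<Sum>u\<in>V. \<Sum>v\<in>V. (if A u v then l u * l v else 0)
            - (if u \<in> Th \<and> v \<in> Th \<and> u \<noteq> v then l u * l v else 0))"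
    using adj_old clique by (intro sum.cong refl) auto
  then show ?thesis by (simp only: sum_subtractf clique_sum)
qed

text \<open>The hypotheses describe the blow-up of a point lying exactly on the curves of Th, which
  pairwise meet there; l k - sum l Th is the multiplicity of l along the new curve minus that
  of the pull-back of l.\<close>

lemma two_chi_blowup:
  assumes fin: "finite V" and k: "k \<notin> V" and Th: "Th \<subseteq> V"
    and clique: "\<forall>u\<in>Th. \<forall>v\<in>Th. A u v \<longleftrightarrow> u \<noteq> v"
    and adj_old: "\<forall>u\<in>V. \<forall>v\<in>V. A' u v \<longleftrightarrow> A u v \<and> \<not> (u \<in> Th \<and> v \<in> Th)"
    and adj_new: "\<forall>v\<in>V. (A' k v \<longleftrightarrow> v \<in> Th) \<and> (A' v k \<longleftrightarrow> v \<in> Th)" and loop: "\<not> A' k k"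
    and eu_old: "\<forall>v\<in>V. e' v = e v - (if v \<in> Th then 1 else 0)" and eu_new: "e' k = -1"
  shows "two_chi (insert k V) e' A' l = two_chi V e A l + (l k - sum l Th) * (l k - sum l Th + 1)"
proof -
  define S where "S = sum l Th"
  define Q where "Q = (\<Sum>v\<in>Th. l v * l v)"
  have diag: "(\<Sum>v\<in>V. e' v * l v * l v) = (\<Sum>v\<in>V. e v * l v * l v) - Q"
  proof -
    have "(\<Sum>v\<in>V. e' v * l v * l v)
        = (\<Sum>v\<in>V. e v * l v * l v - (if v \<in> Th then l v * l v else 0))"
      by (intro sum.cong) (simp_all add: eu_old algebra_simps)
    then show ?thesis
      by (simp add: sum_subtractf sum_restrict_subset[OF fin Th] Q_def)
  qed
  have canon: "(\<Sum>v\<in>V. (- e' v - 2) * l v) = (\<Sum>v\<in>V. (- e v - 2) * l v) + S"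
  proof -
    have "(\<Sum>v\<in>V. (- e' v - 2) * l v) = (\<Sum>v\<in>V. (- e v - 2) * l v + (if v \<in> Th then l v else 0))"
      by (intro sum.cong) (simp_all add: eu_old algebra_simps)
    then show ?thesis
      by (simp add: sum.distrib sum_restrict_subset[OF fin Th] S_def)
  qed
  have adj_sum: "(\<Sum>u\<in>V. \<Sum>v\<in>V. if A' u v then l u * l v else 0)
      = (\<Sum>u\<in>V. \<Sum>v\<in>V. if A u v then l u * l v else 0) - (S * S - Q)"
    using sum_adj_delete_clique[OF fin Th clique adj_old] by (simp add: S_def Q_def)
  have new_row: "(\<Sum>v\<in>V. if A' k v then l k * l v else 0) = l k * S"
  proof -
    have "(\<Sum>v\<in>V. if A' k v then l k * l v else 0) = (\<Sum>v\<in>V. if v \<in> Th then l k * l v else 0)"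
      using adj_new by (intro sum.cong refl) auto
    then show ?thesis by (simp add: sum_restrict_subset[OF fin Th] S_def sum_distrib_left)
  qed
  have new_col: "(\<Sum>u\<in>V. if A' u k then l u * l k else 0) = l k * S"
  proof -
    have "(\<Sum>u\<in>V. if A' u k then l u * l k else 0) = (\<Sum>v\<in>V. if v \<in> Th then l k * l v else 0)"
      using adj_new by (intro sum.cong refl) (auto simp: mult.commute)
    then show ?thesis by (simp add: sum_restrict_subset[OF fin Th] S_def sum_distrib_left)
  qed
  have form: "pl_form (insert k V) e' A' l l = - (l k * l k) + ((\<Sum>v\<in>V. e v * l v * l v) - Q)
      + l k * S + l k * S + ((\<Sum>u\<in>V. \<Sum>v\<in>V. if A u v then l u * l v else 0) - (S * S - Q))"
    unfolding pl_form_def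
    by (subst sum_pair_insert[OF fin k])
       (simp add: fin k loop diag adj_sum new_row new_col eu_new)
  have canon': "pl_K (insert k V) e' l = - l k + ((\<Sum>v\<in>V. (- e v - 2) * l v) + S)"
    unfolding pl_K_def sum.insert[OF fin k] by (simp add: canon eu_new)
  show ?thesis
    unfolding two_chi_def form canon' unfolding pl_form_def pl_K_def S_def[symmetric]
    by (simp add: algebra_simps)
qed

lemma rational_graph_blowup:
  assumes rat: "rational_graph V e A" and fin: "finite V" and k: "k \<notin> V" and Th: "Th \<subseteq> V"
    and clique: "\<forall>u\<in>Th. \<forall>v\<in>Th. A u v \<longleftrightarrow> u \<noteq> v"
    and adj_old: "\<forall>u\<in>V. \<forall>v\<in>V. A' u v \<longleftrightarrow> A u v \<and> \<not> (u \<in> Th \<and> v \<in> Th)"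
    and adj_new: "\<forall>v\<in>V. (A' k v \<longleftrightarrow> v \<in> Th) \<and> (A' v k \<longleftrightarrow> v \<in> Th)" and loop: "\<not> A' k k"
    and eu_old: "\<forall>v\<in>V. e' v = e v - (if v \<in> Th then 1 else 0)" and eu_new: "e' k = -1"
  shows "rational_graph (insert k V) e' A'"
  unfolding rational_graph_iff_two_chi
proof (intro allI impI)
  fix l :: "nat \<Rightarrow> int"
  assume l: "(\<forall>v\<in>insert k V. 0 \<le> l v) \<and> (\<exists>v\<in>insert k V. l v \<noteq> 0)"
  define a where "a = l k - sum l Th"
  have chi: "two_chi (insert k V) e' A' l = two_chi V e A l + a * (a + 1)"
    unfolding a_def by (rule two_chi_blowup[OF fin k Th clique adj_old adj_new loop eu_old eu_new])
  show "2 \<le> two_chi (insert k V) e' A' l"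
  proof (cases "\<exists>v\<in>V. l v \<noteq> 0")
    case True
    then have "2 \<le> two_chi V e A l" using rat l by (auto simp: rational_graph_iff_two_chi)
    then show ?thesis using chi int_times_succ_nonneg[of a] by simp
  next
    case False
    then have "two_chi V e A l = 0" "a = l k" "1 \<le> l k"
      using l Th by (auto simp: two_chi_vanishing a_def intro!: sum.neutral)
    then show ?thesis using chi by (smt (verit) mult_le_cancel_right1)
  qed
qed

section \<open>Attaching the chain\<close>

text \<open>chain_adj N u A attaches a chain N, N + 1, ... at u to the graph A on {..<N};
  chain_euler N u e s are the Euler numbers after s blow-ups, the first at a general point of
  the curve u and each further one at a general point of the newest curve.\<close>

definition chain_adj :: "nat \<Rightarrow> nat \<Rightarrow> (nat \<Rightarrow> nat \<Rightarrow> bool) \<Rightarrow> nat \<Rightarrow> nat \<Rightarrow> bool" where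
  "chain_adj N u A x y \<longleftrightarrow> (x < N \<and> y < N \<and> A x y) \<or> (x = u \<and> y = N) \<or> (x = N \<and> y = u)
      \<or> (N \<le> x \<and> y = Suc x) \<or> (N \<le> y \<and> x = Suc y)"

definition chain_euler :: "nat \<Rightarrow> nat \<Rightarrow> (nat \<Rightarrow> int) \<Rightarrow> nat \<Rightarrow> nat \<Rightarrow> int" where
  "chain_euler N u e s v =
     (if v < N then (if v = u \<and> 0 < s then e v - 1 else e v)
      else if Suc v = N + s then -1 else -2)"

lemma rational_graph_chain_blowups:
  assumes rat: "rational_graph {..<N} e A" and u: "u < N" and loop: "\<not> A u u"
  shows "rational_graph {..<N + s} (chain_euler N u e s) (chain_adj N u A)"
proof (induction s)
  case 0
  show ?case
    using rat by (subst rational_graph_cong) (auto simp: chain_euler_def chain_adj_def)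
next
  case (Suc s)
  define w where "w = (if s = 0 then u else N + s - 1)"
  have w: "w < N + s" "\<not> chain_adj N u A w w" using u loop by (auto simp: w_def chain_adj_def)
  have "rational_graph (insert (N + s) {..<N + s}) (chain_euler N u e (Suc s)) (chain_adj N u A)"
  proof (rule rational_graph_blowup[OF Suc.IH, where Th = "{w}"])
    show "\<forall>v\<in>{..<N + s}. (chain_adj N u A (N + s) v \<longleftrightarrow> v \<in> {w})
                          \<and> (chain_adj N u A v (N + s) \<longleftrightarrow> v \<in> {w})"
      using u by (auto simp: w_def chain_adj_def)
    show "\<forall>v\<in>{..<N + s}. chain_euler N u e (Suc s) v
                          = chain_euler N u e s v - (if v \<in> {w} then 1 else 0)"
      using u by (auto simp: w_def chain_euler_def)
  qed (use w u in \<open>auto simp: chain_adj_def chain_euler_def\<close>)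
  moreover have "insert (N + s) {..<N + s} = {..<N + Suc s}" by auto
  ultimately show ?case by simp
qed

lemma AR_graph_GM:
  assumes rat: "rational_graph {..<nv R} (eu R) (adj R)" and loop: "\<forall>v. \<not> adj R v v"
    and nv: "0 < nv R" and v0: "eu R (nv R - 1) = -1" "1 \<le> mu R (nv R - 1)"
    and ks: "ks \<noteq> []" "hd ks \<ge> 1" "\<forall>k\<in>set (tl ks). k \<ge> 2"
  shows "AR_graph (GM_V R ks) (GM_e R ks) (GM_A R ks)"
proof -
  define N where "N = nv R"
  define v0 where "v0 = N - 1"
  define s where "s = length ks"
  have V: "GM_V R ks = {..<N + s}" by (simp add: GM_V_def N_def s_def)
  have k0: "1 \<le> ks ! 0" using ks by (cases ks) auto
  have kj: "2 \<le> ks ! (v - N)" if "N < v" "v < N + s" for v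
    using ks(3) that unfolding s_def by (cases ks) (auto simp: nth_Cons')
  have "rational_graph {..<N + s} (chain_euler N v0 (eu R) s) (chain_adj N v0 (adj R))"
    using rational_graph_chain_blowups[OF rat[folded N_def]] nv loop by (simp add: N_def v0_def)
  then have chain: "rational_graph (GM_V R ks) (chain_euler N v0 (eu R) s) (GM_A R ks)"
    unfolding V by (rule rational_graph_cong[THEN iffD1, rotated 2])
      (auto simp: GM_A_def chain_adj_def N_def v0_def s_def)
  show ?thesis
    unfolding AR_graph_def
  proof (intro bexI allI impI)
    fix x assume x: "x < GM_e R ks v0"
    show "rational_graph (GM_V R ks) ((GM_e R ks)(v0 := x)) (GM_A R ks)"
    proof (rule rational_graph_mono[OF chain], unfold V, intro ballI)
      fix v assume "v \<in> {..<N + s}"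
      then show "((GM_e R ks)(v0 := x)) v \<le> chain_euler N v0 (eu R) s v"
        using x nv v0 k0 kj[of v] ks(1)
        by (auto simp: GM_e_def chain_euler_def N_def v0_def s_def)
    qed
  next
    show "v0 \<in> GM_V R ks" using nv by (simp add: V N_def v0_def)
  qed
qed

section \<open>The blow-up process\<close>

lemma fdiv_mult_cancel:
  assumes "X \<noteq> 0" "Y = 0 \<or> subdegree X \<le> subdegree Y"
  shows "X * fdiv Y X = Y"
proof -
  define s where "s = subdegree X"
  have X: "X = fps_shift s X * fps_X ^ s" unfolding s_def by (rule subdegree_decompose)
  have Y: "Y = fps_shift s Y * fps_X ^ s"
    using assms(2) unfolding s_def by (auto intro: subdegree_decompose')
  have unit: "fps_shift s X $ 0 \<noteq> 0" using assms(1) unfolding s_def by simp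
  have "X * fdiv Y X = (fps_shift s X * inverse (fps_shift s X)) * (fps_shift s Y * fps_X ^ s)"
    unfolding fdiv_def s_def[symmetric] by (subst X) (simp add: algebra_simps)
  also have "\<dots> = Y" using inverse_mult_eq_1'[OF unit] Y by simp
  finally show ?thesis .
qed

lemma fdiv_nth_0_eq_0:
  assumes "subdegree Y < subdegree X"
  shows "fdiv X Y $ 0 = 0"
proof -
  have "fps_shift (subdegree Y) X $ 0 = 0"
    unfolding fps_shift_nth add_0 by (rule nth_less_subdegree_zero[OF assms])
  then show ?thesis unfolding fdiv_def fps_mult_nth_0 by simp
qed

definition px_divides_py :: "rstate \<Rightarrow> bool" where
  "px_divides_py st \<longleftrightarrow> py st = 0 \<or> subdegree (px st) \<le> subdegree (py st)"

lemma nv_blowup [simp]: "nv (blowup st) = Suc (nv st)"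
  and eu_blowup: "eu (blowup st) =
    (\<lambda>c. if c = nv st then -1 else if through st c then eu st c - 1 else eu st c)"
  and adj_blowup: "adj (blowup st) = (\<lambda>u v. (adj st u v \<and> \<not> (through st u \<and> through st v))
    \<or> (u = nv st \<and> through st v) \<or> (v = nv st \<and> through st u))"
  and mu_blowup: "mu (blowup st) =
    (mu st)(nv st := bmult (px st) (py st) + optmu st (ax st) + optmu st (ay st))"
  unfolding blowup_def Let_def by auto

lemma blowup_px_divides_py:
  assumes "px_divides_py st"
  shows "px (blowup st) = px st"
    and "py (blowup st) = fdiv (py st) (px st) - fps_const (fdiv (py st) (px st) $ 0)"
    and "ax (blowup st) = Some (nv st)"
    and "ay (blowup st) = (if fdiv (py st) (px st) $ 0 = 0 then ay st else None)"
  using assms unfolding blowup_def Let_def px_divides_py_def by auto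

lemma blowup_not_px_divides_py:
  assumes "\<not> px_divides_py st"
  shows "px (blowup st) = fdiv (px st) (py st)"
    and "py (blowup st) = py st"
    and "ax (blowup st) = ax st"
    and "ay (blowup st) = Some (nv st)"
  using assms unfolding blowup_def Let_def px_divides_py_def by auto

text \<open>When the axis y = 0 is an exceptional curve, the branch is not contained in it.\<close>

definition branch_inv :: "rstate \<Rightarrow> bool" where
  "branch_inv st \<longleftrightarrow> px st \<noteq> 0 \<and> px st $ 0 = 0 \<and> py st $ 0 = 0 \<and> (ay st \<noteq> None \<longrightarrow> py st \<noteq> 0)"

definition divisor_inv :: "rstate \<Rightarrow> bool" where
  "divisor_inv st \<longleftrightarrow> (\<forall>c. through st c \<longrightarrow> c < nv st)
     \<and> (\<forall>i j. ax st = Some i \<and> ay st = Some j \<longrightarrow> i \<noteq> j \<and> adj st i j \<and> adj st j i)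
     \<and> (\<forall>u. \<not> adj st u u) \<and> (\<forall>u v. adj st u v \<longrightarrow> u < nv st \<and> v < nv st)"

lemma branch_inv_blowup:
  assumes "branch_inv st"
  shows "branch_inv (blowup st)"
proof (cases "px_divides_py st")
  case True
  note b = blowup_px_divides_py[OF True]
  have "py (blowup st) \<noteq> 0" if "ay (blowup st) \<noteq> None"
  proof -
    have "fdiv (py st) (px st) $ 0 = 0" "py st \<noteq> 0"
      using that assms b(4) by (auto simp: branch_inv_def split: if_splits)
    moreover have "px st * fdiv (py st) (px st) = py st"
      using assms True by (simp add: fdiv_mult_cancel branch_inv_def px_divides_py_def)
    ultimately show ?thesis using b(2) by auto
  qed
  then show ?thesis using assms b(1,2) by (simp add: branch_inv_def)
next
  case False
  note b = blowup_not_px_divides_py[OF False]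
  have "py st \<noteq> 0" "subdegree (py st) < subdegree (px st)"
    using False by (auto simp: px_divides_py_def)
  moreover have "py st * fdiv (px st) (py st) = px st"
    using fdiv_mult_cancel[of "py st" "px st"] calculation by simp
  ultimately show ?thesis
    using assms b by (auto simp: branch_inv_def fdiv_nth_0_eq_0)
qed

lemma blowup_axes:
  shows "ax (blowup st) = Some i \<Longrightarrow> i = nv st \<or> ax st = Some i"
    and "ay (blowup st) = Some j \<Longrightarrow> j = nv st \<or> ay st = Some j"
    and "ax (blowup st) = Some i \<Longrightarrow> ay (blowup st) = Some j \<Longrightarrow>
           (i = nv st \<and> ay st = Some j) \<or> (j = nv st \<and> ax st = Some i)"
  by (cases "px_divides_py st";
      simp add: blowup_px_divides_py blowup_not_px_divides_py split: if_splits)+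

lemma divisor_inv_blowup:
  assumes "divisor_inv st"
  shows "divisor_inv (blowup st)"
proof -
  have through: "through st c \<Longrightarrow> c < nv st" for c using assms by (simp add: divisor_inv_def)
  have "through (blowup st) c \<Longrightarrow> c = nv st \<or> through st c" for c
    using blowup_axes(1,2) by (auto simp: through_def)
  then have "\<forall>c. through (blowup st) c \<longrightarrow> c < nv (blowup st)" using through by fastforce
  moreover have "i \<noteq> j \<and> adj (blowup st) i j \<and> adj (blowup st) j i"
    if "ax (blowup st) = Some i" "ay (blowup st) = Some j" for i j
  proof -
    have "(i = nv st \<and> through st j) \<or> (j = nv st \<and> through st i)"
      using blowup_axes(3)[OF that] by (auto simp: through_def)
    then show ?thesis using through by (auto simp: adj_blowup)
  qed
  moreover have "\<forall>u. \<not> adj (blowup st) u u"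
    and "\<forall>u v. adj (blowup st) u v \<longrightarrow> u < nv (blowup st) \<and> v < nv (blowup st)"
    using assms through by (auto simp: adj_blowup divisor_inv_def less_Suc_eq)
  ultimately show ?thesis by (simp add: divisor_inv_def)
qed

text \<open>The curves through the blown-up point pairwise meet there, so they form a clique.\<close>

lemma rational_dual_graph_blowup:
  assumes div: "divisor_inv st" and rat: "rational_graph {..<nv st} (eu st) (adj st)"
  shows "rational_graph {..<nv (blowup st)} (eu (blowup st)) (adj (blowup st))"
proof -
  define Th where "Th = {c. through st c}"
  have Th: "Th \<subseteq> {..<nv st}" and bounded: "\<forall>u v. adj st u v \<longrightarrow> u < nv st \<and> v < nv st"
    using div by (auto simp: divisor_inv_def Th_def)
  have clique: "\<forall>u\<in>Th. \<forall>v\<in>Th. adj st u v \<longleftrightarrow> u \<noteq> v"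
    using div by (auto simp: divisor_inv_def Th_def through_def)
  have "rational_graph (insert (nv st) {..<nv st}) (eu (blowup st)) (adj (blowup st))"
    by (rule rational_graph_blowup[OF rat _ _ Th clique])
      (use Th bounded in \<open>auto simp: adj_blowup eu_blowup Th_def\<close>)
  then show ?thesis by (simp add: lessThan_Suc)
qed

definition resolution_inv :: "rstate \<Rightarrow> bool" where
  "resolution_inv st \<longleftrightarrow> branch_inv st \<and> divisor_inv st
     \<and> rational_graph {..<nv st} (eu st) (adj st)
     \<and> (0 < nv st \<longrightarrow> eu st (nv st - 1) = -1 \<and> 1 \<le> mu st (nv st - 1))"

lemma bmult_pos:
  assumes "X \<noteq> 0" "X $ 0 = 0" "Y $ 0 = 0"
  shows "1 \<le> bmult X Y"
  using assms subdegree_eq_0_iff[of X] subdegree_eq_0_iff[of Y] by (auto simp: bmult_def)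

lemma resolution_inv_blowup:
  assumes "resolution_inv st"
  shows "resolution_inv (blowup st)"
proof -
  have "1 \<le> bmult (px st) (py st)"
    using assms by (intro bmult_pos) (auto simp: resolution_inv_def branch_inv_def)
  then have "eu (blowup st) (nv st) = -1" "1 \<le> mu (blowup st) (nv st)"
    by (simp_all add: eu_blowup mu_blowup)
  then show ?thesis
    using assms branch_inv_blowup divisor_inv_blowup rational_dual_graph_blowup
    by (simp add: resolution_inv_def)
qed

lemma resolution_inv_init_state:
  assumes "1 \<le> n" "n \<le> subdegree y"
  shows "resolution_inv (init_state n y)"
proof -
  have "y $ 0 = 0" using assms by (cases "y = 0") (auto intro: nth_less_subdegree_zero)
  then show ?thesis
    using assms by (simp add: resolution_inv_def branch_inv_def divisor_inv_def through_def
        init_state_def rational_graph_def)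
qed

lemma resolves_resolution_inv: "resolves st R \<Longrightarrow> resolution_inv st \<Longrightarrow> resolution_inv R"
  by (induction rule: resolves.induct) (auto intro: resolution_inv_blowup)

lemma resolves_nv_less: "resolves st R \<Longrightarrow> \<not> good st \<Longrightarrow> nv st < nv R"
proof (induction rule: resolves.induct)
  case (blowstep st R)
  show ?case
    using blowstep by (cases "good (blowup st)") (auto elim: resolves.cases)
qed simp

lemma resolves_of_good_iterate: "good ((blowup ^^ i) st) \<Longrightarrow> \<exists>R. resolves st R"
proof (induction i arbitrary: st)
  case 0
  then show ?case using resolves.finished by auto
next
  case (Suc i)
  show ?case
  proof (cases "good st")
    case False
    then show ?thesis using Suc resolves.blowstep by (metis comp_apply funpow_Suc_right)
  qed (use resolves.finished in blast)
qed

section \<open>Power series in one series of positive order\<close>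

lemma subdegree_pos: "F \<noteq> 0 \<Longrightarrow> F $ 0 = 0 \<Longrightarrow> 0 < subdegree F"
  by (metis gr0I subdegree_eq_0_iff)

lemma sum_mixed_powers_leading_term:
  fixes G H :: "'a::{idom,semiring_char_0} fps" and i :: nat
  assumes G: "G \<noteq> 0" and sd: "subdegree H = subdegree G"
    and lead: "H $ subdegree G = G $ subdegree G"
  defines "g \<equiv> subdegree G" and "S \<equiv> (\<Sum>j<Suc i. G ^ (i - j) * H ^ j)"
  shows "subdegree S = i * g" and "S $ (i * g) = of_nat (Suc i) * (G $ g) ^ i"
proof -
  have H: "H \<noteq> 0" using G lead by auto
  have idx: "(i - j) * g + j * g = i * g" if "j < Suc i" for j
    using that by (simp add: add_mult_distrib[symmetric])
  have term_sd: "subdegree (G ^ (i - j) * H ^ j) = i * g" if "j < Suc i" for j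
    using idx[OF that] G H sd by (simp add: g_def)
  have "(G ^ (i - j) * H ^ j) $ (i * g) = (G $ g) ^ i" if "j < Suc i" for j
  proof -
    have "(G ^ (i - j) * H ^ j) $ ((i - j) * g + j * g) = (G $ g) ^ (i - j) * (H $ g) ^ j"
      using nth_subdegree_mult[of "G ^ (i - j)" "H ^ j"] fps_pow_base[of H j, unfolded sd] sd
      by (simp add: g_def)
    also have "\<dots> = (G $ g) ^ i" using that lead by (simp add: g_def power_add[symmetric])
    finally show ?thesis using idx[OF that] by simp
  qed
  then show S_lead: "S $ (i * g) = of_nat (Suc i) * (G $ g) ^ i"
    unfolding S_def fps_sum_nth by simp
  have "S $ k = 0" if "k < i * g" for k
    unfolding S_def fps_sum_nth
  proof (intro sum.neutral ballI)
    fix j assume "j \<in> {..<Suc i}"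
    then show "(G ^ (i - j) * H ^ j) $ k = 0"
      using that term_sd[of j] by (intro nth_less_subdegree_zero) simp
  qed
  moreover have "(of_nat (Suc i) :: 'a) \<noteq> 0" by (metis of_nat_eq_0_iff nat.distinct(1))
  ultimately show "subdegree S = i * g"
    using S_lead G by (intro subdegreeI) (auto simp: g_def simp del: of_nat_Suc)
qed

lemma power_diff_leading_term:
  fixes G H :: "'a::{idom,semiring_char_0} fps"
  assumes G: "G \<noteq> 0" and HG: "H \<noteq> G" and sd: "subdegree H = subdegree G"
    and lead: "H $ subdegree G = G $ subdegree G"
  defines "g \<equiv> subdegree G" and "e \<equiv> subdegree (H - G)"
  shows "subdegree (H ^ Suc i - G ^ Suc i) = i * g + e"
    and "(H ^ Suc i - G ^ Suc i) $ (i * g + e) = of_nat (Suc i) * (G $ g) ^ i * (H - G) $ e"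
proof -
  define S where "S = (\<Sum>j<Suc i. G ^ (i - j) * H ^ j)"
  note S = sum_mixed_powers_leading_term[OF G sd lead, of i, folded g_def S_def]
  have diff: "H ^ Suc i - G ^ Suc i = (H - G) * S"
    unfolding S_def power_diff_sumr2 by simp
  have "S \<noteq> 0"
    using S(2) G by (auto simp: g_def simp del: of_nat_Suc)
  moreover have "H - G \<noteq> 0" using HG by simp
  ultimately show "subdegree (H ^ Suc i - G ^ Suc i) = i * g + e"
    unfolding diff e_def using subdegree_mult S(1) by (metis add.commute)
  have "((H - G) * S) $ (e + i * g) = (H - G) $ e * S $ (i * g)"
    unfolding e_def S(1)[symmetric] by (rule nth_subdegree_mult)
  then show "(H ^ Suc i - G ^ Suc i) $ (i * g + e) = of_nat (Suc i) * (G $ g) ^ i * (H - G) $ e"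
    unfolding diff S(2) by (simp only: add.commute mult.commute mult.left_commute)
qed

text \<open>A series of positive order is determined, among series with the same leading term,
  by its image under composition with P: the first difference of P \<circ> H and P \<circ> G sits in
  degree (m - 1) g + e, where m, g, e are the orders of P, G and H - G.\<close>

lemma fps_compose_left_cancel:
  fixes P G H :: "'a::{idom,semiring_char_0} fps"
  assumes P: "P \<noteq> 0" "P $ 0 = 0" and G: "G \<noteq> 0" "G $ 0 = 0"
    and sd: "subdegree H = subdegree G" and lead: "H $ subdegree G = G $ subdegree G"
    and eq: "P oo H = P oo G"
  shows "H = G"
proof (rule ccontr)
  assume HG: "H \<noteq> G"
  define g where "g = subdegree G"
  define e where "e = subdegree (H - G)"
  define m where "m = subdegree P"
  have g: "1 \<le> g" using subdegree_pos[OF G] by (simp add: g_def)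
  obtain m' where m: "m = Suc m'" using subdegree_pos[OF P(1,2)] by (cases m) (auto simp: m_def)
  define E where "E = m' * g + e"
  note leading = power_diff_leading_term[OF G(1) HG sd lead, folded g_def e_def]
  have "(P oo H) $ E - (P oo G) $ E = (\<Sum>i=0..E. P $ i * (H ^ i - G ^ i) $ E)"
    by (simp add: fps_compose_nth sum_subtractf[symmetric] right_diff_distrib)
  also have "\<dots> = (\<Sum>i=0..E. if i = m then P $ m * (H ^ m - G ^ m) $ E else 0)"
  proof (intro sum.cong refl)
    fix i
    have "(H ^ i - G ^ i) $ E = 0" if "m < i"
    proof -
      obtain i' where "i = Suc i'" "m' < i'" using \<open>m < i\<close> m by (cases i) auto
      then have "E < subdegree (H ^ i - G ^ i)"
        using leading(1)[of i'] g by (simp add: E_def)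
      then show ?thesis by (rule nth_less_subdegree_zero)
    qed
    moreover have "P $ i = 0" if "i < m" using that unfolding m_def by (rule nth_less_subdegree_zero)
    ultimately show "P $ i * (H ^ i - G ^ i) $ E = (if i = m then P $ m * (H ^ m - G ^ m) $ E else 0)"
      by (cases i m rule: linorder_cases) auto
  qed
  also have "\<dots> = P $ m * (of_nat m * (G $ g) ^ m' * (H - G) $ e)"
  proof -
    have "H $ 0 = 0" using g sd by (intro nth_less_subdegree_zero) (simp add: g_def)
    then have "1 \<le> e" using subdegree_pos[of "H - G"] HG G by (simp add: e_def)
    moreover have "m' \<le> m' * g" using g by simp
    ultimately have "m \<le> E" unfolding E_def using m by linarith
    then show ?thesis using leading(2)[of m'] m by (simp add: E_def)
  qed
  moreover have "P $ m \<noteq> 0" "G $ g \<noteq> 0" using P G by (simp_all add: m_def g_def)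
  moreover have "(H - G) $ e \<noteq> 0" unfolding e_def by (rule nth_subdegree_nonzero) (use HG in simp)
  moreover have "(of_nat m :: 'a) \<noteq> 0" using m by (metis of_nat_eq_0_iff nat.distinct(1))
  ultimately have "(P oo H) $ E - (P oo G) $ E \<noteq> 0" by simp
  then show False using eq by simp
qed

lemma exp_root_of_unity_power_eq_1:
  assumes "1 \<le> g"
  shows "exp (2 * of_real pi * \<i> / of_nat g) ^ k = 1 \<longleftrightarrow> g dvd k"
proof -
  have "exp (2 * of_real pi * \<i> / of_nat g) ^ k = exp (2 * of_real pi * \<i> * of_nat k / of_nat g)"
    by (simp add: exp_of_nat_mult[symmetric] field_simps)
  then show ?thesis using complex_root_unity_eq_1[OF assms, of k] by simp
qed

lemma fps_compose_rotation_invariant: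
  fixes P G :: "'a::{field,semiring_char_0} fps"
  assumes P: "P \<noteq> 0" "P $ 0 = 0" and G: "G \<noteq> 0" "G $ 0 = 0"
    and c: "c ^ subdegree G = 1" and inv: "(P oo G) oo (fps_const c * fps_X) = P oo G"
  shows "G oo (fps_const c * fps_X) = G"
proof (rule fps_compose_left_cancel[OF P G])
  let ?H = "G oo (fps_const c * fps_X)"
  have "1 \<le> subdegree G" using subdegree_pos[OF G] by simp
  then have "c \<noteq> 0" using c by (metis power_0_left zero_neq_one not_one_le_zero)
  show lead: "?H $ subdegree G = G $ subdegree G" using c by simp
  show "subdegree ?H = subdegree G"
  proof (rule subdegreeI)
    show "?H $ subdegree G \<noteq> 0" using lead G by simp
    show "?H $ i = 0" if "i < subdegree G" for i using nth_less_subdegree_zero[OF that] by simp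
  qed
  show "P oo ?H = P oo G" using G inv by (simp add: fps_compose_assoc)
qed

lemma Gcd_exponents_ne_1_if_compose:
  fixes G P Q y :: "complex fps"
  assumes G: "G $ 0 = 0" "2 \<le> subdegree G" and n: "1 \<le> n"
    and x: "fps_X ^ n = P oo G" and y: "y = Q oo G"
  shows "Gcd ({n} \<union> {k. y $ k \<noteq> 0}) \<noteq> 1"
proof
  assume gcd: "Gcd ({n} \<union> {k. y $ k \<noteq> 0}) = 1"
  define g where "g = subdegree G"
  define c where "c = exp (2 * of_real pi * \<i> / of_nat g)"
  define L where "L = fps_const c * (fps_X :: complex fps)"
  have G0: "G \<noteq> 0" using G by auto
  have c_pow: "c ^ k = 1 \<longleftrightarrow> g dvd k" for k
    using exp_root_of_unity_power_eq_1 G by (simp add: c_def g_def)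
  have "P $ 0 = (P oo G) $ 0" by simp
  also have "\<dots> = 0" using x[symmetric] n by simp
  finally have P: "P \<noteq> 0" "P $ 0 = 0" using x by auto
  have "n = subdegree P * g" using arg_cong[OF x, of subdegree] G by (simp add: g_def fps_X_power_subdegree)
  then have gn: "g dvd n" by simp
  have "(P oo G) oo L = P oo G"
    unfolding x[symmetric] L_def using gn c_pow by (intro fps_ext) auto
  then have "G oo L = G"
    using fps_compose_rotation_invariant[OF P G0 G(1)] c_pow by (simp add: L_def g_def)
  then have yL: "y oo L = y" using G by (simp add: y L_def fps_compose_assoc[symmetric])
  have "g dvd k" if "k \<in> {n} \<union> {k. y $ k \<noteq> 0}" for k
  proof (cases "k = n")
    case False
    then have "y $ k \<noteq> 0" using that by simp
    moreover have "c ^ k * y $ k = y $ k" using fps_nth_compose_linear[of y c k] yL unfolding L_def by metis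
    ultimately show ?thesis using c_pow by simp
  qed (use gn in simp)
  then have "g dvd Gcd ({n} \<union> {k. y $ k \<noteq> 0})" by (intro Gcd_greatest)
  then have "g dvd 1" unfolding gcd .
  then show False using G by (simp add: g_def)
qed

section \<open>Termination of the resolution\<close>

lemma nonincreasing_nat_stabilizes:
  fixes a :: "nat \<Rightarrow> nat"
  assumes "\<And>i. a (Suc i) \<le> a i"
  obtains N where "\<And>j. N \<le> j \<Longrightarrow> a j = a N"
proof -
  obtain N where "\<And>i. a N \<le> a i" using ex_has_least_nat[of "\<lambda>_. True" 0 a] by auto
  then show ?thesis using that lift_Suc_antimono_le[of a, OF assms] by (meson antisym)
qed

lemma fps_eq_compose_of_recurrence:
  fixes X :: "'a::idom fps"
  assumes X: "X $ 0 = 0" and rec: "\<And>j. W j = fps_const (c j) + X * W (Suc j)"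
  shows "W j = Abs_fps (\<lambda>k. c (j + k)) oo X"
proof -
  define C where "C j = Abs_fps (\<lambda>k. c (j + k))" for j
  have "C j = fps_const (c j) + fps_X * C (Suc j)" for j
    by (rule fps_ext) (auto simp: C_def)
  then have C_rec: "C j oo X = fps_const (c j) + X * (C (Suc j) oo X)" for j
    by (metis fps_compose_add_distrib fps_compose_mult_distrib[OF X] fps_X_fps_compose_startby0[OF X]
        fps_const_compose)
  define D where "D j = W j - (C j oo X)" for j
  have D_rec: "D j = X * D (Suc j)" for j
    using rec[of j] C_rec[of j] by (simp add: D_def algebra_simps)
  have D_pow: "D j = X ^ i * D (j + i)" for i j
  proof (induction i)
    case (Suc i)
    then show ?case using D_rec[of "j + i"] by (simp add: mult.assoc mult.left_commute)
  qed simp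
  have "D j $ k = 0" for k
  proof (cases "X = 0")
    case False
    have "Suc k * 1 \<le> Suc k * subdegree X"
      using subdegree_pos[OF False X] by (intro mult_le_mono2) simp
    then have "k < subdegree (X ^ Suc k)" unfolding subdegree_power by simp
    then show ?thesis using D_pow[of j "Suc k"] fps_mult_nth_outside_subdegrees(1) by metis
  qed (use D_pow[of j "Suc k"] in simp)
  then show ?thesis by (simp add: fps_ext D_def C_def)
qed

lemma subdegree_px_blowup_less:
  assumes inv: "branch_inv st" and not_div: "\<not> px_divides_py st"
  shows "subdegree (px (blowup st)) < subdegree (px st)"
proof -
  have Y: "py st \<noteq> 0" "subdegree (py st) < subdegree (px st)"
    using not_div by (auto simp: px_divides_py_def)
  have "py st * px (blowup st) = px st"
    using fdiv_mult_cancel[of "py st" "px st"] Y by (simp add: blowup_not_px_divides_py[OF not_div])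
  moreover have "px (blowup st) \<noteq> 0" using branch_inv_blowup[OF inv] by (simp add: branch_inv_def)
  moreover have "0 < subdegree (py st)" using subdegree_pos[OF Y(1)] inv by (simp add: branch_inv_def)
  ultimately show ?thesis using Y(1) by (metis subdegree_mult less_add_same_cancel2)
qed

text \<open>The order of the x-coordinate never increases and drops at every blow-up in the other
  chart, so from some point on every blow-up takes place in the chart where it is kept.\<close>

lemma blowup_sequence_stabilizes:
  assumes inv: "\<And>i. branch_inv (st i)" and seq: "\<And>i. st (Suc i) = blowup (st i)"
  obtains N where "\<And>j. N \<le> j \<Longrightarrow> px_divides_py (st j) \<and> px (st j) = px (st N)"
proof -
  let ?a = "\<lambda>i. subdegree (px (st i))"
  have mono: "?a (Suc i) \<le> ?a i" for i
    using subdegree_px_blowup_less[OF inv] blowup_px_divides_py(1) seq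
    by (metis less_imp_le order_refl)
  obtain N where N: "\<And>j. N \<le> j \<Longrightarrow> ?a j = ?a N"
    using nonincreasing_nat_stabilizes[of ?a, OF mono] by blast
  have div: "px_divides_py (st j)" if "N \<le> j" for j
    using N[of j] N[of "Suc j"] that subdegree_px_blowup_less[OF inv] seq by (metis le_SucI less_irrefl)
  have "px (st j) = px (st N)" if "N \<le> j" for j
    using that by (induction rule: dec_induct) (simp_all add: seq div blowup_px_divides_py(1))
  with div show ?thesis using that by blast
qed

text \<open>Once the x-coordinate X is fixed, each blow-up replaces y by y / X - c_j, so
  y = X (c_0 + X (c_1 + ...)) is a power series in X.\<close>

lemma stable_py_eq_compose:
  assumes seq: "\<And>i. st (Suc i) = blowup (st i)" and X: "px (st N) \<noteq> 0" "px (st N) $ 0 = 0"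
    and stable: "\<And>j. N \<le> j \<Longrightarrow> px_divides_py (st j) \<and> px (st j) = px (st N)"
    and c: "\<And>j. c j = fdiv (py (st (N + j))) (px (st N)) $ 0"
  shows "py (st N) = (fps_X * Abs_fps c) oo px (st N)"
proof -
  define W where "W j = fdiv (py (st (N + j))) (px (st N))" for j
  have XW: "px (st N) * W j = py (st (N + j))" for j
  proof -
    have "py (st (N + j)) = 0 \<or> subdegree (px (st N)) \<le> subdegree (py (st (N + j)))"
      using stable[of "N + j"] unfolding px_divides_py_def by (metis le_add1)
    then show ?thesis using fdiv_mult_cancel[OF X(1)] by (simp add: W_def)
  qed
  have "py (st (N + Suc j)) = W j - fps_const (c j)" for j
    using blowup_px_divides_py(2)[of "st (N + j)"] stable[of "N + j"] seq[of "N + j"]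
    by (simp add: W_def c)
  then have "W j = fps_const (c j) + px (st N) * W (Suc j)" for j
    using XW[of "Suc j"] by simp
  then have "W 0 = Abs_fps (\<lambda>k. c (0 + k)) oo px (st N)"
    by (rule fps_eq_compose_of_recurrence[OF X(2)])
  then have "W 0 = Abs_fps c oo px (st N)" by simp
  then show ?thesis
    using XW[of 0] by (simp add: fps_compose_mult_distrib[OF X(2)] X(2))
qed

lemma blowup_coords_compose:
  fixes G :: "complex fps"
  assumes inv: "branch_inv st" and G: "G $ 0 = 0"
    and "px (blowup st) = P oo G" "py (blowup st) = Q oo G"
  shows "\<exists>P' Q'. px st = P' oo G \<and> py st = Q' oo G"
proof (cases "px_divides_py st")
  case True
  define c where "c = fdiv (py st) (px st) $ 0"
  have "py st = px st * (py (blowup st) + fps_const c)"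
    using fdiv_mult_cancel[of "px st" "py st"] inv True
    by (simp add: blowup_px_divides_py c_def branch_inv_def px_divides_py_def)
  then have "py st = (P * (Q + fps_const c)) oo G"
    using assms True
    by (simp add: blowup_px_divides_py fps_compose_mult_distrib fps_compose_add_distrib)
  then show ?thesis using assms True by (metis blowup_px_divides_py(1))
next
  case False
  have "px st = py (blowup st) * px (blowup st)"
    using fdiv_mult_cancel[of "py st" "px st"] False
    by (auto simp: blowup_not_px_divides_py px_divides_py_def)
  then have "px st = (Q * P) oo G" using assms by (simp add: fps_compose_mult_distrib)
  then show ?thesis using assms False by (metis blowup_not_px_divides_py(2))
qed

lemma blowup_sequence_compose:
  fixes G :: "complex fps"
  assumes inv: "\<And>i. branch_inv (st i)" and seq: "\<And>i. st (Suc i) = blowup (st i)"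
    and G: "G $ 0 = 0" and "px (st N) = P oo G" "py (st N) = Q oo G"
  shows "\<exists>P Q. px (st 0) = P oo G \<and> py (st 0) = Q oo G"
proof -
  have "\<exists>P Q. px (st i) = P oo G \<and> py (st i) = Q oo G" if "i \<le> N" for i
    using that
  proof (induction rule: inc_induct)
    case base
    then show ?case using assms by blast
  next
    case (step i)
    then show ?case using blowup_coords_compose[OF inv G] seq by metis
  qed
  then show ?thesis by blast
qed

text \<open>With x of order one the point becomes good as soon as the branch leaves the exceptional
  curve y = 0; so it never leaves it, all the constants c_j vanish, and y = 0.\<close>

lemma stable_subdegree_ne_1:
  assumes inv: "\<And>i. branch_inv (st i)" and seq: "\<And>i. st (Suc i) = blowup (st i)"
    and stable: "\<And>j. N \<le> j \<Longrightarrow> px_divides_py (st j) \<and> px (st j) = px (st N)"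
    and not_good: "\<And>i. \<not> good (st i)"
  shows "subdegree (px (st N)) \<noteq> 1"
proof
  assume sd: "subdegree (px (st N)) = 1"
  define c where "c j = fdiv (py (st (N + j))) (px (st N)) $ 0" for j
  have X: "px (st N) \<noteq> 0" "px (st N) $ 0 = 0" using inv[of N] by (simp_all add: branch_inv_def)
  have blowup_N: "px (st (N + Suc j)) = px (st N)" "ax (st (N + Suc j)) = Some (nv (st (N + j)))"
    "ay (st (N + Suc j)) = (if c j = 0 then ay (st (N + j)) else None)" for j
    using blowup_px_divides_py[of "st (N + j)"] stable[of "N + j"] seq[of "N + j"]
    by (simp_all add: c_def)
  have ay: "ay (st (N + Suc j)) \<noteq> None" for j
  proof
    assume "ay (st (N + Suc j)) = None"
    then have "good (st (N + Suc j))" using blowup_N[of j] X sd by (simp add: good_def)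
    then show False using not_good by blast
  qed
  have "c j = 0" for j using ay[of j] blowup_N(3)[of j] by (auto split: if_splits)
  then have "Abs_fps c = 0" by (intro fps_ext) simp
  then have "py (st N) = 0" using stable_py_eq_compose[OF seq X stable c_def] by simp
  then have "py (st (Suc N)) = 0"
    using blowup_px_divides_py(2)[of "st N"] stable[of N] seq[of N] by (simp add: fdiv_def)
  then show False using inv[of "Suc N"] ay[of 0] by (simp add: branch_inv_def)
qed

lemma blowup_eventually_good:
  assumes n: "2 \<le> n" "n \<le> subdegree y" and prim: "Gcd ({n} \<union> {k. y $ k \<noteq> 0}) = 1"
  shows "\<exists>i. good ((blowup ^^ i) (init_state n y))"
proof (rule ccontr)
  assume not_good: "\<nexists>i. good ((blowup ^^ i) (init_state n y))"
  define st where "st i = (blowup ^^ i) (init_state n y)" for i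
  have seq: "st (Suc i) = blowup (st i)" for i by (simp add: st_def)
  have inv: "branch_inv (st i)" for i
  proof (induction i)
    case 0
    show ?case using resolution_inv_init_state[of n y] n by (simp add: st_def resolution_inv_def)
  qed (simp add: seq branch_inv_blowup)
  obtain N where stable: "\<And>j. N \<le> j \<Longrightarrow> px_divides_py (st j) \<and> px (st j) = px (st N)"
    using blowup_sequence_stabilizes[of st, OF inv seq] by blast
  define X where "X = px (st N)"
  have X: "X \<noteq> 0" "X $ 0 = 0" using inv[of N] by (simp_all add: X_def branch_inv_def)
  have "subdegree X \<noteq> 1"
    using stable_subdegree_ne_1[of st, OF inv seq stable] not_good by (simp add: X_def st_def)
  then have X2: "2 \<le> subdegree X" using subdegree_pos[OF X] by simp
  define c where "c j = fdiv (py (st (N + j))) X $ 0" for j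
  have "px (st N) = fps_X oo X" "py (st N) = (fps_X * Abs_fps c) oo X"
    using stable_py_eq_compose[OF seq X[unfolded X_def] stable c_def[unfolded X_def]] X
    by (simp_all add: X_def)
  then obtain P Q where "fps_X ^ n = P oo X" "y = Q oo X"
    using blowup_sequence_compose[of st, OF inv seq X(2)] by (fastforce simp: st_def init_state_def)
  then show False using Gcd_exponents_ne_1_if_compose[OF X(2) X2] n prim by simp
qed

lemma init_state_not_good:
  assumes "2 \<le> n" "n \<le> subdegree y"
  shows "\<not> good (init_state n y)"
  using assms by (simp add: good_def init_state_def bmult_def fps_X_power_subdegree)

theorem lemma2p4p2:
  fixes n :: nat and y :: "complex fps" and p q :: nat and ks :: "int list"
  assumes mult: "n \<ge> 2"
    and tangent: "subdegree y \<ge> n"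
    and conv: "fps_conv_radius y > 0"
    and primitive: "Gcd ({n} \<union> {k. fps_nth y k \<noteq> 0}) = 1"
    and pq: "0 < p" "0 < q" "coprime p q"
    and ks: "ks \<noteq> []" "hd ks \<ge> 1" "\<forall>k\<in>set (tl ks). k \<ge> 2"
            "hjcf ks = real p / real q"
  shows "(\<exists>R. resolves (init_state n y) R) \<and>
         (\<forall>R. resolves (init_state n y) R \<longrightarrow>
              AR_graph (GM_V R ks) (GM_e R ks) (GM_A R ks))"
proof (intro conjI allI impI)
  show "\<exists>R. resolves (init_state n y) R"
    using blowup_eventually_good[OF mult tangent primitive] resolves_of_good_iterate by blast
next
  fix R assume R: "resolves (init_state n y) R"
  have "resolution_inv R"
    using resolves_resolution_inv[OF R resolution_inv_init_state] mult tangent by simp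
  moreover have "0 < nv R"
    using resolves_nv_less[OF R init_state_not_good[OF mult tangent]] by simp
  ultimately show "AR_graph (GM_V R ks) (GM_e R ks) (GM_A R ks)"
    using AR_graph_GM[OF _ _ _ _ _ ks(1-3)] by (simp add: resolution_inv_def divisor_inv_def)
qed

end
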